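(* Let $\operatorname{Cs}(4)=\{x,y,z\}$ be the quandle with multiplication $xx=x$, $yy=y$, $zz=z$, $xy=x$, $xz=y$, $yx=y$, $yz=x$, $zx=z$, $zy=z$. Then the set of non-zero idempotents of the integral quandle ring $\mathbb{Z}[\operatorname{Cs}(4)]$ is $$I(\mathbb{Z}[\operatorname{Cs}(4)])=\big\{(1-\beta)x+\beta y,\ \alpha x+\alpha y+(1-2\alpha)z~|~\alpha,\beta\in\mathbb{Z}\big\}.$$
   Context: For a quandle $Q$, the quandle ring $\mathbb{Z}[Q]$ is the free abelian group with basis $Q$, with multiplication $\big(\sum_i\alpha_i q_i\big)\big(\sum_j\beta_j q_j\big)=\sum_{i,j}\alpha_i\beta_j (q_iq_j)$ extending the quandle operation bilinearly. $I(\mathbb{Z}[Q])$ denotes the set of non-zero elements $w$ with $w^2=w$. *)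

theory Defs
  imports Main
begin

datatype cs4 = X | Y | Z

fun cs4_op :: "cs4 \<Rightarrow> cs4 \<Rightarrow> cs4" where
  "cs4_op X X = X" | "cs4_op Y Y = Y" | "cs4_op Z Z = Z"
| "cs4_op X Y = X" | "cs4_op X Z = Y"
| "cs4_op Y X = Y" | "cs4_op Y Z = X"
| "cs4_op Z X = Z" | "cs4_op Z Y = Z"

lemma UNIV_cs4: "(UNIV :: cs4 set) = {X, Y, Z}"
  using cs4.exhaust by auto

instance cs4 :: finite
  by standard (simp add: UNIV_cs4)

text \<open>Elements of the integral quandle ring Z[Cs(4)]: since the basis is finite,
  the free abelian group is all coefficient functions cs4 => int.\<close>
type_synonym cs4_ring = "cs4 \<Rightarrow> int"

definition basis_elt :: "cs4 \<Rightarrow> cs4_ring" where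
  "basis_elt q = (\<lambda>r. if r = q then 1 else 0)"

definition qr_mult :: "cs4_ring \<Rightarrow> cs4_ring \<Rightarrow> cs4_ring" where
  "qr_mult u v = (\<lambda>r. \<Sum>p\<in>UNIV. \<Sum>q\<in>UNIV. if cs4_op p q = r then u p * v q else 0)"

definition idempotents_cs4 :: "cs4_ring set" where
  "idempotents_cs4 = {w. w \<noteq> (\<lambda>_. 0) \<and> qr_mult w w = w}"

end

theory Submission
  imports Defs
begin

text \<open>Comparing coefficients, \<open>w = a x + b y + c z\<close> is idempotent iff
  \<open>a\<^sup>2 + ab + bc = a\<close>, \<open>b\<^sup>2 + ac + ab = b\<close> and \<open>c\<^sup>2 + ca + cb = c\<close>.
  The last equation reads \<open>c (a + b + c - 1) = 0\<close>. If \<open>c = 0\<close>, the first two become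
  \<open>a (a + b - 1) = 0 = b (a + b - 1)\<close>, so a non-zero solution has \<open>a + b = 1\<close>.
  If \<open>c \<noteq> 0\<close>, then \<open>a + b + c = 1\<close>, and subtracting \<open>a (a + b + c - 1) = 0\<close> from the
  first equation leaves \<open>c (b - a) = 0\<close>, so \<open>a = b\<close> and \<open>c = 1 - 2a\<close>.\<close>

lemma qr_mult_apply_X: "qr_mult u v X = u X * v X + u X * v Y + u Y * v Z"
  by (simp add: qr_mult_def UNIV_cs4)

lemma qr_mult_apply_Y: "qr_mult u v Y = u Y * v Y + u X * v Z + u Y * v X"
  by (simp add: qr_mult_def UNIV_cs4)

lemma qr_mult_apply_Z: "qr_mult u v Z = u Z * v Z + u Z * v X + u Z * v Y"
  by (simp add: qr_mult_def UNIV_cs4)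

lemma cs4_fun_eq_iff: "f = g \<longleftrightarrow> f X = g X \<and> f Y = g Y \<and> f Z = g Z"
  by (auto simp: fun_eq_iff intro: cs4.induct)

lemma cs4_idempotent_equations_iff:
  fixes a b c :: "'a :: idom"
  shows "(a * a + a * b + b * c = a \<and> b * b + a * c + b * a = b \<and> c * c + c * a + c * b = c
          \<and> \<not> (a = 0 \<and> b = 0 \<and> c = 0))
     \<longleftrightarrow> (c = 0 \<and> a + b = 1) \<or> (a = b \<and> c = 1 - 2 * a)"
    (is "?equations \<longleftrightarrow> ?solutions")
proof
  assume ?equations
  then have eX: "a * a + a * b + b * c = a" and eY: "b * b + a * c + b * a = b"
    and eZ: "c * c + c * a + c * b = c" and nonzero: "\<not> (a = 0 \<and> b = 0 \<and> c = 0)"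
    by blast+
  show ?solutions
  proof (cases "c = 0")
    case True
    have "a * (a + b - 1) = 0" "b * (a + b - 1) = 0"
      using eX eY True by (simp_all add: algebra_simps)
    then show ?thesis using True nonzero by auto
  next
    case False
    have "c * (a + b + c - 1) = 0"
      using eZ by (simp add: algebra_simps)
    then have sum: "a + b + c = 1"
      using False by simp
    have "c * (b - a) = (a * a + a * b + b * c - a) - a * (a + b + c - 1)"
      by (simp add: algebra_simps)
    then have "c * (b - a) = 0"
      using eX sum by simp
    then have "a = b"
      using False by simp
    then show ?thesis
      using sum by (simp add: algebra_simps)
  qed
next
  assume ?solutions
  then show ?equations
  proof (elim disjE conjE)
    assume "c = 0" "a + b = 1"
    moreover have "a * a + a * b = a * (a + b)" "b * b + a * b = b * (a + b)"
      by (simp_all add: algebra_simps)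
    ultimately show ?equations
      by (auto simp: mult.commute)
  next
    assume "a = b" "c = 1 - 2 * a"
    moreover from \<open>c = 1 - 2 * a\<close> have "a + a + c = 1"
      by simp
    moreover have "a * a + a * a + a * c = a * (a + a + c)" "c * c + c * a + c * a = c * (a + a + c)"
      by (simp_all add: algebra_simps)
    ultimately show ?equations
      by (auto simp: mult.commute)
  qed
qed

lemma idempotents_cs4_iff:
  "w \<in> idempotents_cs4 \<longleftrightarrow> (w Z = 0 \<and> w X + w Y = 1) \<or> (w X = w Y \<and> w Z = 1 - 2 * w X)"
  unfolding idempotents_cs4_def mem_Collect_eq cs4_fun_eq_iff[of "qr_mult w w"]
    cs4_fun_eq_iff[of w] qr_mult_apply_X qr_mult_apply_Y qr_mult_apply_Z
  using cs4_idempotent_equations_iff[of "w X" "w Y" "w Z"] by auto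

theorem proposition4p2:
  shows "idempotents_cs4 =
    {(\<lambda>r. (1 - \<beta>) * basis_elt X r + \<beta> * basis_elt Y r) | \<beta> :: int. True} \<union>
    {(\<lambda>r. \<alpha> * basis_elt X r + \<alpha> * basis_elt Y r + (1 - 2 * \<alpha>) * basis_elt Z r)
       | \<alpha> :: int. True}"
proof (intro set_eqI iffI)
  fix w
  assume "w \<in> idempotents_cs4"
  then consider "w Z = 0" "w X + w Y = 1" | "w X = w Y" "w Z = 1 - 2 * w X"
    unfolding idempotents_cs4_iff by blast
  then show "w \<in> {(\<lambda>r. (1 - \<beta>) * basis_elt X r + \<beta> * basis_elt Y r) | \<beta>. True} \<union>
    {(\<lambda>r. \<alpha> * basis_elt X r + \<alpha> * basis_elt Y r + (1 - 2 * \<alpha>) * basis_elt Z r) | \<alpha>. True}"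
  proof cases
    case 1
    then have "w = (\<lambda>r. (1 - w Y) * basis_elt X r + w Y * basis_elt Y r)"
      by (simp add: cs4_fun_eq_iff basis_elt_def)
    then show ?thesis by blast
  next
    case 2
    then have "w = (\<lambda>r. w X * basis_elt X r + w X * basis_elt Y r + (1 - 2 * w X) * basis_elt Z r)"
      by (simp add: cs4_fun_eq_iff basis_elt_def)
    then show ?thesis by blast
  qed
qed (auto simp: idempotents_cs4_iff basis_elt_def)

end
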